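(* Consider Algorithm GEN with parameter $t_0$ on an instance satisfying the standing assumption, with an edge labeling as in the context. Let $u,v$ be the two offline neighbors of a second-class online type, and let $t\in[0,1]$. Then $\bar g(t)/\bar g_{u,v}(t)\le 1$.
   Context: **Model.** Poisson arrival model. Each online type $i$ independently arrives according to a Poisson process of rate $\lambda_i$ on $[0,1]$. On arrival, a vertex is immediately and irrevocably matched to an unmatched offline neighbor or discarded. Each offline vertex is matched at most once. The instance is a bipartite graph $(I,J,E)$ with rates $\lambda_i>0$. **Standing assumption.** There are values $x_{ij}\ge0$ (an optimal Jaillet–Lu LP solution) with $\sum_i x_{ij}=1$ for every $j\in J$, and every type is one of two kinds: - first-class: exactly one neighbor $j$, with $x_{ij}=\lambda_i$; - second-class: exactly two neighbors $j_1,j_2$, with $x_{ij_1}=x_{ij_2}=\lambda_i/2$. **Labeling.** Each edge is labeled first-class or second-class. All edges of first-class types are labeled first-class. For every $j$, the sum of $x_{ij}$ over first-class-labeled edges at $j$ equals $1-\ln 2$, so second-class-labeled edges at $j$ have total $x$-value $\ln 2$. **Reference process.** $H$ is the instance with offline vertices $a,b$; a type of rate $2\ln2$ adjacent to both; and a type of rate $1-\ln2$ adjacent only to $a$ and another adjacent only to $b$. Algorithm RES with parameter $t_0$ works as follows: - single-neighbor arrivals are matched if their neighbor is unmatched; - a two-neighbor arrival at time $t>t_0$ with some unmatched neighbor is matched to a uniformly random unmatched neighbor. On $H$ under RES, $f(t)$ is the probability that a given offline vertex is matched by time $t$, $g(t)$ is the probability both are, and $\bar g=1-g$. **Algorithm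 GEN (parameter $t_0$).** For offline $u,v$, $g_{u,v}(t)$ is the probability, under GEN, that both are matched by time $t$, and $\bar g_{u,v}=1-g_{u,v}$. Edges are used only if their offline endpoint is unmatched. - A first-class arrival is matched to its neighbor if possible. - A second-class arrival of type $i$ with neighbors $u,v$ chooses at most one edge, with disjoint probabilities: - each first-class-labeled edge $(i,u)$ with probability $1/2$; - if the arrival time is $t>t_0$, each second-class-labeled edge $(i,u)$ with probability $\bar g(t)/(2\bar g_{u,v}(t))$ if $v$ is unmatched, or $\bar g(t)/\bar g_{u,v}(t)$ if $v$ is matched. *)

theory Defs
  imports "HOL-Analysis.Analysis"
begin

text \<open>The state of an online matching process is the set S of matched offline
vertices.  An online algorithm that decides only from the arrival type, the
arrival time and the current state yields a continuous-time Markov chain on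
subsets of J; r t S w is the rate (at time t, in state S, with w not in S) at which
w becomes matched.  P t S is the probability that the matched set at time t
is exactly S.  We describe P by the (integrated) Kolmogorov forward equations
on the horizon [0,1], starting from the empty matching.\<close>

definition matched_process ::
  "'j set \<Rightarrow> (real \<Rightarrow> 'j set \<Rightarrow> 'j \<Rightarrow> real) \<Rightarrow> (real \<Rightarrow> 'j set \<Rightarrow> real) \<Rightarrow> bool" where
  "matched_process J r P \<longleftrightarrow>
     (\<forall>S. P 0 S = (if S = {} then 1 else 0)) \<and>
     (\<forall>S. S \<subseteq> J \<longrightarrow> (\<forall>t\<in>{0..1}.
        ((\<lambda>s. (\<Sum>w\<in>S. P s (S - {w}) * r s (S - {w}) w)
              - P s S * (\<Sum>w\<in>J - S. r s S w))
          has_integral (P t S - P 0 S)) {0..t}))"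

definition both_matched :: "'j set \<Rightarrow> (real \<Rightarrow> 'j set \<Rightarrow> real) \<Rightarrow> real \<Rightarrow> 'j \<Rightarrow> 'j \<Rightarrow> real" where
  "both_matched J P t u v = (\<Sum>S\<in>{S. S \<subseteq> J \<and> u \<in> S \<and> v \<in> S}. P t S)"

text \<open>Instance: online types I with neighbourhoods N i and rates lam i.
RES: single-neighbour arrivals match their neighbour if unmatched; a
two-neighbour arrival at time t > t0 with some unmatched neighbour is matched
to a uniformly random unmatched neighbour.\<close>
definition RES_rate ::
  "'i set \<Rightarrow> ('i \<Rightarrow> 'j set) \<Rightarrow> ('i \<Rightarrow> real) \<Rightarrow> real \<Rightarrow> real \<Rightarrow> 'j set \<Rightarrow> 'j \<Rightarrow> real" where
  "RES_rate I N lam t0 t S w =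
     (\<Sum>i\<in>{i\<in>I. w \<in> N i}. lam i *
        (if card (N i) = 1 then 1
         else if card (N i) = 2 \<and> t > t0 then (if N i - {w} \<subseteq> S then 1 else 1/2)
         else 0))"

text \<open>H: offline vertices a = 0, b = 1; type 0 of rate 2 ln 2 adjacent to both,
type 1 of rate 1 - ln 2 adjacent to a only, type 2 of rate 1 - ln 2 adjacent to b only.\<close>
definition H_I :: "nat set" where "H_I = {0, 1, 2}"
definition H_J :: "nat set" where "H_J = {0, 1}"
definition H_N :: "nat \<Rightarrow> nat set" where
  "H_N i = (if i = 0 then {0, 1} else if i = 1 then {0} else {1})"
definition H_lam :: "nat \<Rightarrow> real" where
  "H_lam i = (if i = 0 then 2 * ln 2 else 1 - ln 2)"

text \<open>Rate at which w becomes matched under GEN in state S at time t.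
gbar is the function 1 - g of the reference process; P is GEN's own
distribution (GEN is self-referential through g_{u,v}).  lab i w = True means
the edge (i,w) is labelled first-class.  For a second-class type i the other
neighbour v of w ranges over the singleton N i - {w}.\<close>
definition GEN_rate ::
  "'i set \<Rightarrow> 'j set \<Rightarrow> ('i \<Rightarrow> 'j set) \<Rightarrow> ('i \<Rightarrow> real) \<Rightarrow> ('i \<Rightarrow> 'j \<Rightarrow> bool) \<Rightarrow> real \<Rightarrow>
   (real \<Rightarrow> real) \<Rightarrow> (real \<Rightarrow> 'j set \<Rightarrow> real) \<Rightarrow> real \<Rightarrow> 'j set \<Rightarrow> 'j \<Rightarrow> real" where
  "GEN_rate I J N lam lab t0 gbar P t S w =
     (\<Sum>i\<in>{i\<in>I. w \<in> N i}. lam i *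
        (if card (N i) = 1 then 1
         else (\<Sum>v\<in>N i - {w}.
                 if lab i w then 1/2
                 else if t > t0 then
                   (if v \<in> S then gbar t / (1 - both_matched J P t w v)
                    else gbar t / (2 * (1 - both_matched J P t w v)))
                 else 0)))"

definition standing_instance ::
  "'i set \<Rightarrow> 'j set \<Rightarrow> ('i \<Rightarrow> 'j set) \<Rightarrow> ('i \<Rightarrow> real) \<Rightarrow> ('i \<Rightarrow> 'j \<Rightarrow> real) \<Rightarrow> bool" where
  "standing_instance I J N lam x \<longleftrightarrow>
     finite I \<and> finite J \<and>
     (\<forall>i\<in>I. N i \<subseteq> J \<and> lam i > 0) \<and>
     (\<forall>i\<in>I. \<forall>j\<in>N i. x i j \<ge> 0) \<and>
     (\<forall>j\<in>J. (\<Sum>i\<in>{i\<in>I. j \<in> N i}. x i j) = 1) \<and>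
     (\<forall>i\<in>I. (card (N i) = 1 \<and> (\<forall>j\<in>N i. x i j = lam i)) \<or>
             (card (N i) = 2 \<and> (\<forall>j\<in>N i. x i j = lam i / 2)))"

definition valid_labeling ::
  "'i set \<Rightarrow> 'j set \<Rightarrow> ('i \<Rightarrow> 'j set) \<Rightarrow> ('i \<Rightarrow> 'j \<Rightarrow> real) \<Rightarrow> ('i \<Rightarrow> 'j \<Rightarrow> bool) \<Rightarrow> bool" where
  "valid_labeling I J N x lab \<longleftrightarrow>
     (\<forall>i\<in>I. card (N i) = 1 \<longrightarrow> (\<forall>j\<in>N i. lab i j)) \<and>
     (\<forall>j\<in>J. (\<Sum>i\<in>{i\<in>I. j \<in> N i \<and> lab i j}. x i j) = 1 - ln 2)"

end

theory Submission
  imports Defs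
begin

text \<open>GEN refers to its own quantities gbar_{u,v}, so its rates stay bounded only while these
  stay away from 0. We propagate an invariant over [0, 1] by a continuity induction: all state
  probabilities of GEN are nonnegative, every offline vertex is unmatched with the same
  probability as a vertex of H, and gbar_{u,v} \<ge> gbar for the two neighbours of every
  second-class type. In H the two offline vertices are symmetric and a stays unmatched with
  probability at least e^(-2t), so gbar \<ge> e^(-2) throughout. If the invariant holds at time tau,
  then on a short window after tau continuity keeps every gbar_{u,v} above e^(-2)/2 and the rates
  of GEN are bounded. There the labeling makes the constant part of the drift of each marginal
  gap, (1 - ln 2) and ln 2 gbar, cancel against the drift in H, so the marginal gaps satisfy a
  homogeneous linear inequality; and a barrier argument bounds the negative parts of
  gbar_{u,v} - gbar by their own integral. Gronwall's inequality makes both vanish on the window.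
  At time t the invariant gives 0 < gbar t \<le> gbar_{u,v} t.\<close>

section \<open>Calculus on the unit interval\<close>

definition primitive :: "(real \<Rightarrow> real) \<Rightarrow> (real \<Rightarrow> real) \<Rightarrow> bool" where
  "primitive F f \<longleftrightarrow>
     (\<forall>s t. 0 \<le> s \<longrightarrow> s \<le> t \<longrightarrow> t \<le> 1 \<longrightarrow> (f has_integral (F t - F s)) {s..t})"

lemma primitiveD:
  "primitive F f \<Longrightarrow> 0 \<le> s \<Longrightarrow> s \<le> t \<Longrightarrow> t \<le> 1 \<Longrightarrow> (f has_integral (F t - F s)) {s..t}"
  unfolding primitive_def by blast

lemma primitive_add:
  assumes "primitive F f" "primitive G g"
  shows "primitive (\<lambda>t. F t + G t) (\<lambda>s. f s + g s)"
  unfolding primitive_def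
proof (intro allI impI)
  fix s t :: real assume "0 \<le> s" "s \<le> t" "t \<le> 1"
  then have "((\<lambda>s. f s + g s) has_integral (F t - F s) + (G t - G s)) {s..t}"
    using assms by (intro has_integral_add primitiveD)
  then show "((\<lambda>s. f s + g s) has_integral F t + G t - (F s + G s)) {s..t}"
    by (simp add: algebra_simps)
qed

lemma primitive_cmult:
  assumes "primitive F f"
  shows "primitive (\<lambda>t. c * F t) (\<lambda>s. c * f s)"
  unfolding primitive_def
proof (intro allI impI)
  fix s t :: real assume "0 \<le> s" "s \<le> t" "t \<le> 1"
  then have "((\<lambda>s. c * f s) has_integral c * (F t - F s)) {s..t}"
    using assms by (intro has_integral_mult_right primitiveD)
  then show "((\<lambda>s. c * f s) has_integral c * F t - c * F s) {s..t}"
    by (simp add: algebra_simps)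
qed

lemma primitive_diff:
  assumes "primitive F f" "primitive G g"
  shows "primitive (\<lambda>t. F t - G t) (\<lambda>s. f s - g s)"
  using primitive_add[OF assms(1) primitive_cmult[OF assms(2), of "-1"]] by simp

lemma primitive_const: "primitive (\<lambda>t. c) (\<lambda>s. 0)"
  unfolding primitive_def by simp

lemma primitive_sum:
  assumes "finite A" "\<And>a. a \<in> A \<Longrightarrow> primitive (F a) (f a)"
  shows "primitive (\<lambda>t. \<Sum>a\<in>A. F a t) (\<lambda>s. \<Sum>a\<in>A. f a s)"
  using assms by (induction A rule: finite_induct) (auto intro: primitive_add primitive_const)

lemma primitive_cong:
  assumes "primitive F f"
    and "\<And>s. 0 \<le> s \<Longrightarrow> s \<le> 1 \<Longrightarrow> f s = g s" "\<And>t. 0 \<le> t \<Longrightarrow> t \<le> 1 \<Longrightarrow> F t = G t"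
  shows "primitive G g"
  unfolding primitive_def
proof (intro allI impI)
  fix s t :: real assume st: "0 \<le> s" "s \<le> t" "t \<le> 1"
  have "(f has_integral (F t - F s)) {s..t}" using assms(1) st by (rule primitiveD)
  then have "(g has_integral (F t - F s)) {s..t}"
    by (rule has_integral_eq[rotated]) (use st assms(2) in auto)
  then show "(g has_integral (G t - G s)) {s..t}" using st assms(3) by simp
qed

lemma primitive_continuous:
  assumes "primitive F f"
  shows "continuous_on {0..1} F"
proof -
  have "(f has_integral (F 1 - F 0)) {0..1}" by (rule primitiveD[OF assms]) auto
  then have "f integrable_on {0..1}" by blast
  then have "continuous_on {0..1} (\<lambda>t. F 0 + integral {0..t} f)"
    by (intro continuous_intros indefinite_integral_continuous_1)
  moreover have "F t = F 0 + integral {0..t} f" if "t \<in> {0..1}" for t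
    using primitiveD[OF assms, of 0 t] that by (auto dest: integral_unique)
  ultimately show ?thesis by (metis (no_types, lifting) continuous_on_cong)
qed

lemma primitive_zero_const:
  assumes "primitive F (\<lambda>s. 0)" "t \<in> {0..1}"
  shows "F t = F 0"
  using primitiveD[OF assms(1), of 0 t] assms(2) by (simp add: has_integral_0_eq)

lemma primitive_exp: "primitive (\<lambda>t. exp (c * t)) (\<lambda>s. c * exp (c * s))"
  unfolding primitive_def
proof (intro allI impI)
  fix s t :: real assume "0 \<le> s" "s \<le> t" "t \<le> 1"
  have "((\<lambda>t. exp (c * t)) has_real_derivative c * exp (c * y)) (at y within {s..t})" for y
    by (auto intro!: derivative_eq_intros)
  then have "((\<lambda>t. exp (c * t)) has_vector_derivative c * exp (c * y)) (at y within {s..t})" for y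
    by (simp add: has_real_derivative_iff_has_vector_derivative)
  then show "((\<lambda>s. c * exp (c * s)) has_integral exp (c * t) - exp (c * s)) {s..t}"
    using \<open>s \<le> t\<close> by (intro fundamental_theorem_of_calculus) auto
qed

lemma primitive_abs_le_integral:
  assumes F: "primitive F f" and a: "0 \<le> a" "a \<le> t" "t \<le> 1" and Fa: "F a = 0"
    and g: "g integrable_on {a..t}" and fg: "\<And>s. s \<in> {a..t} \<Longrightarrow> \<bar>f s\<bar> \<le> g s"
  shows "\<bar>F t\<bar> \<le> integral {a..t} g"
proof -
  have f: "(f has_integral F t) {a..t}" using primitiveD[OF F a] Fa by simp
  have "F t \<le> integral {a..t} g"
    by (rule has_integral_le[OF f integrable_integral[OF g]]) (use fg in force)
  moreover have "- F t \<le> integral {a..t} g"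
    by (rule has_integral_le[OF has_integral_neg[OF f] integrable_integral[OF g]]) (use fg in force)
  ultimately show ?thesis by simp
qed

lemma last_nonneg_time:
  fixes F :: "real \<Rightarrow> real"
  assumes Fc: "continuous_on {a..t} F" and "a \<le> t" and Fa: "0 \<le> F a" and Ft: "F t < 0"
  obtains s0 where "a \<le> s0" "s0 < t" "0 \<le> F s0" "\<And>s. s0 \<le> s \<Longrightarrow> s \<le> t \<Longrightarrow> F s \<le> 0"
proof -
  define Z where "Z = {a..t} \<inter> F -` {0..}"
  have Zc: "closed Z" unfolding Z_def by (intro continuous_closed_preimage Fc) auto
  have aZ: "a \<in> Z" using assms by (auto simp: Z_def)
  have Zb: "bdd_above Z" unfolding Z_def by (auto intro: bdd_aboveI[where M=t])
  define s0 where "s0 = Sup Z"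
  have "s0 \<in> Z" unfolding s0_def using closed_contains_Sup[OF _ Zb Zc] aZ by blast
  then have s0: "a \<le> s0" "s0 \<le> t" "0 \<le> F s0" by (auto simp: Z_def)
  have after: "F s < 0" if "s0 < s" "s \<le> t" for s
  proof (rule ccontr)
    assume "\<not> F s < 0"
    then have "s \<in> Z" using that s0 by (auto simp: Z_def)
    then have "s \<le> s0" unfolding s0_def using Zb by (rule cSup_upper)
    then show False using that by simp
  qed
  have s0t: "s0 < t" using s0 Ft by (cases "s0 = t") auto
  have "F s0 \<le> 0"
  proof (rule ccontr)
    assume "\<not> F s0 \<le> 0"
    then have pos: "F s0 > 0" by simp
    obtain d where d: "d > 0" "\<And>y. y \<in> {a..t} \<Longrightarrow> dist y s0 < d \<Longrightarrow> dist (F y) (F s0) < F s0"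
      using Fc s0 pos unfolding continuous_on_iff by (metis atLeastAtMost_iff)
    define y where "y = min t (s0 + d/2)"
    have y: "y \<in> {a..t}" "dist y s0 < d" "s0 < y" using d s0 s0t by (auto simp: y_def dist_real_def)
    have "F y > 0" using d(2)[OF y(1,2)] pos by (auto simp: dist_real_def)
    then show False using after[OF y(3)] y(1) by auto
  qed
  then have "F s \<le> 0" if "s0 \<le> s" "s \<le> t" for s
    using after[of s] that by (cases "s = s0") auto
  then show ?thesis using that s0 s0t by blast
qed

text \<open>On [s0, t], with s0 the last time at which F is nonnegative, F is nonpositive, so there
  its derivative f is bounded below by -g.\<close>
lemma primitive_barrier:
  assumes F: "primitive F f" and a: "0 \<le> a" "a \<le> t" "t \<le> 1" and Fa: "0 \<le> F a"
    and g0: "\<And>s. s \<in> {a..t} \<Longrightarrow> 0 \<le> g s" and gc: "continuous_on {a..t} g"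
    and fg: "\<And>s. s \<in> {a..t} \<Longrightarrow> F s \<le> 0 \<Longrightarrow> - g s \<le> f s"
  shows "- integral {a..t} g \<le> F t"
proof (cases "0 \<le> F t")
  case True
  have "0 \<le> integral {a..t} g"
    using g0 by (intro integral_nonneg integrable_continuous_real gc) auto
  then show ?thesis using True by linarith
next
  case False
  have "continuous_on {a..t} F"
    using primitive_continuous[OF F] by (rule continuous_on_subset) (use a in auto)
  then obtain s0 where s0: "a \<le> s0" "s0 < t" "0 \<le> F s0"
    and nonpos: "\<And>s. s0 \<le> s \<Longrightarrow> s \<le> t \<Longrightarrow> F s \<le> 0"
    using last_nonneg_time a(2) Fa False by (metis not_le)
  have f: "(f has_integral (F t - F s0)) {s0..t}" using primitiveD[OF F, of s0 t] s0 a by simp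
  have gi: "g integrable_on {s0..t}"
    by (intro integrable_continuous_real continuous_on_subset[OF gc]) (use s0 in auto)
  have "- integral {s0..t} g \<le> F t - F s0"
    by (rule has_integral_le[OF has_integral_neg[OF integrable_integral[OF gi]] f])
      (use fg nonpos s0 in auto)
  moreover have "integral {s0..t} g \<le> integral {a..t} g"
    by (rule integral_subset_le) (use s0 gi g0 in \<open>auto intro: integrable_continuous_real gc\<close>)
  ultimately show ?thesis using s0 by linarith
qed

lemma gronwall_vanishing:
  fixes M :: "real \<Rightarrow> real"
  assumes ab: "a \<le> b" and Mc: "continuous_on {a..b} M" and M0: "\<And>t. t \<in> {a..b} \<Longrightarrow> 0 \<le> M t"
    and Mle: "\<And>t. t \<in> {a..b} \<Longrightarrow> M t \<le> K * integral {a..t} M"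
    and K: "0 \<le> K" "K * (b - a) < 1"
    and t: "t \<in> {a..b}"
  shows "M t = 0"
proof -
  obtain x where x: "x \<in> {a..b}" "\<And>y. y \<in> {a..b} \<Longrightarrow> M y \<le> M x"
    using continuous_attains_sup[of "{a..b}" M] Mc ab by auto
  have "integral {a..x} M \<le> integral {a..x} (\<lambda>_. M x)"
    by (rule integral_le) (use x in \<open>auto intro!: integrable_continuous_real continuous_on_subset[OF Mc]\<close>)
  also have "\<dots> = (x - a) * M x" using x by simp
  also have "\<dots> \<le> (b - a) * M x" using x M0[OF x(1)] by (intro mult_right_mono) auto
  finally have "M x \<le> K * ((b - a) * M x)"
    using Mle[OF x(1)] K mult_left_mono order_trans by blast
  then have "M x * (1 - K * (b - a)) \<le> 0" by (simp add: algebra_simps)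
  then have "M x \<le> 0" using K by (simp add: mult_le_0_iff)
  then show "M t = 0" using x t M0 by (meson order_antisym order_trans)
qed

lemma finite_family_uniformly_continuous:
  fixes f :: "'a \<Rightarrow> 'b::metric_space \<Rightarrow> 'c::metric_space"
  assumes "finite A" "compact S" "\<And>a. a \<in> A \<Longrightarrow> continuous_on S (f a)" "0 < e"
  shows "\<exists>d>0. \<forall>a\<in>A. \<forall>s\<in>S. \<forall>t\<in>S. dist s t < d \<longrightarrow> dist (f a s) (f a t) < e"
  using assms
proof (induction A rule: finite_induct)
  case empty
  then show ?case by (intro exI[of _ 1]) auto
next
  case (insert a A)
  obtain d1 where d1: "d1 > 0" "\<forall>b\<in>A. \<forall>s\<in>S. \<forall>t\<in>S. dist s t < d1 \<longrightarrow> dist (f b s) (f b t) < e"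
    using insert by auto
  have "uniformly_continuous_on S (f a)"
    by (rule compact_uniformly_continuous) (use insert in auto)
  then obtain d2 where d2: "d2 > 0" "\<forall>s\<in>S. \<forall>t\<in>S. dist s t < d2 \<longrightarrow> dist (f a s) (f a t) < e"
    using \<open>0 < e\<close> unfolding uniformly_continuous_on_def by (metis dist_commute)
  show ?case
    using d1 d2 by (intro exI[of _ "min d1 d2"]) auto
qed

lemma unit_interval_stepping:
  fixes h :: real
  assumes start: "Q 0" and h: "0 < h"
    and step: "\<And>\<tau> t. 0 \<le> \<tau> \<Longrightarrow> \<tau> \<le> t \<Longrightarrow> t \<le> 1 \<Longrightarrow> t - \<tau> \<le> h \<Longrightarrow> Q \<tau> \<Longrightarrow> Q t"
    and t: "t \<in> {0..1}"
  shows "Q t"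
proof -
  have "\<forall>t\<in>{0..1}. t \<le> real n * h \<longrightarrow> Q t" for n
  proof (induction n)
    case 0
    then show ?case using start by auto
  next
    case (Suc n)
    show ?case
    proof (intro ballI impI)
      fix t assume t: "t \<in> {0..1}" "t \<le> real (Suc n) * h"
      show "Q t"
      proof (cases "t \<le> real n * h")
        case True
        then show ?thesis using Suc.IH t by blast
      next
        case False
        have "0 \<le> real n * h" using h by simp
        then have "Q (real n * h)" using Suc.IH False t by auto
        then show ?thesis
          using step[of "real n * h" t] \<open>0 \<le> real n * h\<close> False t by (auto simp: algebra_simps)
      qed
    qed
  qed
  moreover obtain n where "1 / h < real n" using reals_Archimedean2 by blast
  then have "t \<le> real n * h" using h t by (simp add: field_simps)
  ultimately show ?thesis using t by blast
qed

section \<open>Kolmogorov forward equations of matched-set processes\<close>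

definition forward_flux ::
  "'j set \<Rightarrow> (real \<Rightarrow> 'j set \<Rightarrow> 'j \<Rightarrow> real) \<Rightarrow> (real \<Rightarrow> 'j set \<Rightarrow> real) \<Rightarrow> 'j set \<Rightarrow> real \<Rightarrow> real"
  where "forward_flux J r P S s =
    (\<Sum>w\<in>S. P s (S - {w}) * r s (S - {w}) w) - P s S * (\<Sum>w\<in>J - S. r s S w)"

definition expectation :: "'j set \<Rightarrow> (real \<Rightarrow> 'j set \<Rightarrow> real) \<Rightarrow> ('j set \<Rightarrow> real) \<Rightarrow> real \<Rightarrow> real"
  where "expectation J P A t = (\<Sum>S\<in>Pow J. A S * P t S)"

definition expected_generator ::
  "'j set \<Rightarrow> (real \<Rightarrow> 'j set \<Rightarrow> 'j \<Rightarrow> real) \<Rightarrow> (real \<Rightarrow> 'j set \<Rightarrow> real) \<Rightarrow> ('j set \<Rightarrow> real) \<Rightarrow> real \<Rightarrow> real"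
  where "expected_generator J r P A s =
    (\<Sum>S\<in>Pow J. P s S * (\<Sum>w\<in>J - S. r s S w * (A (insert w S) - A S)))"

lemma matched_process_initial: "matched_process J r P \<Longrightarrow> P 0 S = (if S = {} then 1 else 0)"
  unfolding matched_process_def by blast

lemma matched_process_primitive:
  assumes mp: "matched_process J r P" and S: "S \<subseteq> J"
  shows "primitive (\<lambda>t. P t S) (forward_flux J r P S)"
  unfolding primitive_def
proof (intro allI impI)
  fix s t :: real assume st: "0 \<le> s" "s \<le> t" "t \<le> 1"
  have from0: "(forward_flux J r P S has_integral (P t S - P 0 S)) {0..t}" if "t \<in> {0..1}" for t
    using mp S that unfolding matched_process_def forward_flux_def by blast
  have ht: "(forward_flux J r P S has_integral (P t S - P 0 S)) {0..t}"
    and hs: "(forward_flux J r P S has_integral (P s S - P 0 S)) {0..s}"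
    using from0 st by auto
  have it: "forward_flux J r P S integrable_on {0..t}" using ht by blast
  have ist: "forward_flux J r P S integrable_on {s..t}"
    by (rule integrable_subinterval_real[OF it]) (use st in auto)
  have "integral {0..s} (forward_flux J r P S) + integral {s..t} (forward_flux J r P S)
      = integral {0..t} (forward_flux J r P S)"
    by (rule Henstock_Kurzweil_Integration.integral_combine) (use st it in auto)
  then have "integral {s..t} (forward_flux J r P S) = P t S - P s S"
    using integral_unique[OF ht] integral_unique[OF hs] by simp
  then show "(forward_flux J r P S has_integral (P t S - P s S)) {s..t}"
    using ist by (metis has_integral_integral)
qed

lemma sum_forward_flux_eq_expected_generator:
  assumes fin: "finite J"
  shows "(\<Sum>S\<in>Pow J. A S * forward_flux J r P S s) = expected_generator J r P A s"
proof -
  have finS: "\<And>S. S \<in> Pow J \<Longrightarrow> finite S" using fin by (auto intro: finite_subset)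
  have inflow: "(\<Sum>S\<in>Pow J. A S * (\<Sum>w\<in>S. P s (S - {w}) * r s (S - {w}) w))
      = (\<Sum>T\<in>Pow J. \<Sum>w\<in>J - T. A (insert w T) * (P s T * r s T w))"
  proof -
    have "(\<Sum>S\<in>Pow J. A S * (\<Sum>w\<in>S. P s (S - {w}) * r s (S - {w}) w))
        = (\<Sum>(S, w)\<in>Sigma (Pow J) (\<lambda>S. S). A S * (P s (S - {w}) * r s (S - {w}) w))"
      by (simp add: sum_distrib_left sum.Sigma fin finS)
    also have "\<dots> = (\<Sum>(T, w)\<in>Sigma (Pow J) (\<lambda>T. J - T). A (insert w T) * (P s T * r s T w))"
      by (rule sum.reindex_bij_witness[where i = "\<lambda>(T, w). (insert w T, w)" and j = "\<lambda>(S, w). (S - {w}, w)"])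
        (auto simp: insert_absorb)
    also have "\<dots> = (\<Sum>T\<in>Pow J. \<Sum>w\<in>J - T. A (insert w T) * (P s T * r s T w))"
      by (rule sum.Sigma[symmetric]) (use fin in auto)
    finally show ?thesis .
  qed
  have "(\<Sum>S\<in>Pow J. A S * forward_flux J r P S s)
      = (\<Sum>S\<in>Pow J. A S * (\<Sum>w\<in>S. P s (S - {w}) * r s (S - {w}) w))
        - (\<Sum>S\<in>Pow J. A S * (P s S * (\<Sum>w\<in>J - S. r s S w)))"
    unfolding forward_flux_def by (simp add: right_diff_distrib sum_subtractf)
  also have "\<dots> = expected_generator J r P A s"
    unfolding inflow expected_generator_def
    by (simp add: sum_subtractf[symmetric] sum_distrib_left right_diff_distrib algebra_simps)
  finally show ?thesis .
qed

lemma expectation_primitive: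
  assumes "matched_process J r P" "finite J"
  shows "primitive (expectation J P A) (expected_generator J r P A)"
proof -
  have "primitive (\<lambda>t. \<Sum>S\<in>Pow J. A S * P t S) (\<lambda>s. \<Sum>S\<in>Pow J. A S * forward_flux J r P S s)"
    using assms by (intro primitive_sum primitive_cmult matched_process_primitive) auto
  then show ?thesis
    by (rule primitive_cong) (auto simp: sum_forward_flux_eq_expected_generator assms(2) expectation_def)
qed

lemma matched_process_total:
  assumes mp: "matched_process J r P" and fin: "finite J" and t: "t \<in> {0..1}"
  shows "(\<Sum>S\<in>Pow J. P t S) = 1"
proof -
  have "expected_generator J r P (\<lambda>_. 1) = (\<lambda>s. 0)"
    by (simp add: expected_generator_def fun_eq_iff)
  then have "primitive (expectation J P (\<lambda>_. 1)) (\<lambda>s. 0)"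
    using expectation_primitive[OF mp fin, of "\<lambda>_. 1"] by simp
  then have "expectation J P (\<lambda>_. 1) t = expectation J P (\<lambda>_. 1) 0"
    using t by (rule primitive_zero_const)
  also have "\<dots> = 1"
    using fin by (simp add: expectation_def matched_process_initial[OF mp] sum.delta')
  finally show ?thesis by (simp add: expectation_def)
qed

text \<open>Induction on the size of S: the inflow into S comes from smaller states, which are
  nonnegative, so the outflow term alone cannot push P t S below 0.\<close>
lemma matched_process_nonneg:
  assumes mp: "matched_process J r P" and fin: "finite J" and ab: "0 \<le> a" "a \<le> b" "b \<le> 1"
    and r0: "\<And>s S w. s \<in> {a..b} \<Longrightarrow> S \<subseteq> J \<Longrightarrow> w \<in> J - S \<Longrightarrow> 0 \<le> r s S w"
    and Pa: "\<And>S. S \<subseteq> J \<Longrightarrow> 0 \<le> P a S"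
    and s: "s \<in> {a..b}" and S: "S \<subseteq> J"
  shows "0 \<le> P s S"
  using S s
proof (induction "card S" arbitrary: S s rule: less_induct)
  case less
  have smaller: "0 \<le> P y (S - {w})" if "y \<in> {a..b}" "w \<in> S" for y w
    using less.hyps[of "S - {w}" y] less.prems that fin
    by (meson Diff_subset card_Diff1_less finite_subset order_trans)
  have "- integral {a..s} (\<lambda>_. 0) \<le> P s S"
  proof (rule primitive_barrier[OF matched_process_primitive[OF mp less.prems(1)]])
    show "0 \<le> a" "a \<le> s" "s \<le> 1" "0 \<le> P a S" using less.prems ab Pa by auto
    fix y assume y: "y \<in> {a..s}" and Py: "P y S \<le> 0"
    have yab: "y \<in> {a..b}" using y less.prems by auto
    have "0 \<le> (\<Sum>w\<in>S. P y (S - {w}) * r y (S - {w}) w)"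
      using less.prems by (intro sum_nonneg mult_nonneg_nonneg smaller yab r0) auto
    moreover have "P y S * (\<Sum>w\<in>J - S. r y S w) \<le> 0"
      using Py less.prems by (intro mult_nonpos_nonneg sum_nonneg r0 yab) auto
    ultimately show "- 0 \<le> forward_flux J r P S y" unfolding forward_flux_def by linarith
  qed auto
  then show ?case by simp
qed

lemma expected_generator_unmatched:
  assumes fin: "finite J" and u: "u \<in> J"
  shows "expected_generator J r P (\<lambda>S. if u \<notin> S then 1 else 0) s
    = - (\<Sum>S\<in>Pow J. if u \<notin> S then P s S * r s S u else 0)"
proof -
  have inner: "(\<Sum>w\<in>J - S. r s S w * ((if u \<notin> insert w S then 1 else 0) - (if u \<notin> S then 1 else 0)))
      = (if u \<notin> S then - r s S u else 0)" for S
  proof (cases "u \<in> S")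
    case False
    then have "(\<Sum>w\<in>J - S. r s S w * ((if u \<notin> insert w S then 1 else 0) - (if u \<notin> S then 1 else 0)))
        = (\<Sum>w\<in>J - S. if w = u then - r s S u else 0)"
      by (intro sum.cong) auto
    then show ?thesis using False u fin by simp
  qed simp
  show ?thesis unfolding expected_generator_def inner sum_negf[symmetric] by (rule sum.cong) auto
qed

lemma expected_generator_both:
  assumes fin: "finite J" and u: "u \<in> J" and v: "v \<in> J" and uv: "u \<noteq> v"
  shows "expected_generator J r P (\<lambda>S. if u \<in> S \<and> v \<in> S then 1 else 0) s
    = (\<Sum>S\<in>Pow J. P s S * ((if u \<in> S \<and> v \<notin> S then r s S v else 0)
                          + (if v \<in> S \<and> u \<notin> S then r s S u else 0)))"
proof -
  have inner: "(\<Sum>w\<in>J - S. r s S w * ((if u \<in> insert w S \<and> v \<in> insert w S then 1 else 0)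
                                      - (if u \<in> S \<and> v \<in> S then 1 else 0)))
      = (if u \<in> S \<and> v \<notin> S then r s S v else 0) + (if v \<in> S \<and> u \<notin> S then r s S u else 0)" for S
  proof -
    have "(\<Sum>w\<in>J - S. r s S w * ((if u \<in> insert w S \<and> v \<in> insert w S then 1 else 0)
                                  - (if u \<in> S \<and> v \<in> S then 1 else 0)))
        = (\<Sum>w\<in>J - S. (if w = v then (if u \<in> S \<and> v \<notin> S then r s S v else 0) else 0)
                     + (if w = u then (if v \<in> S \<and> u \<notin> S then r s S u else 0) else 0))"
      using uv by (intro sum.cong) auto
    then show ?thesis using fin u v by (simp add: sum.distrib)
  qed
  show ?thesis unfolding expected_generator_def inner ..
qed

lemma expected_generator_both_le:
  assumes fin: "finite J" and u: "u \<in> J" and v: "v \<in> J" and uv: "u \<noteq> v"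
    and P: "\<And>S. S \<subseteq> J \<Longrightarrow> 0 \<le> P s S"
    and r: "\<And>S w. S \<subseteq> J \<Longrightarrow> w \<in> J \<Longrightarrow> r s S w \<le> B"
  shows "expected_generator J r P (\<lambda>S. if u \<in> S \<and> v \<in> S then 1 else 0) s
    \<le> B * (\<Sum>S\<in>Pow J. if (u \<in> S) \<noteq> (v \<in> S) then P s S else 0)"
proof -
  have "expected_generator J r P (\<lambda>S. if u \<in> S \<and> v \<in> S then 1 else 0) s
      = (\<Sum>S\<in>Pow J. P s S * ((if u \<in> S \<and> v \<notin> S then r s S v else 0)
                            + (if v \<in> S \<and> u \<notin> S then r s S u else 0)))"
    by (rule expected_generator_both[OF fin u v uv])
  also have "\<dots> \<le> (\<Sum>S\<in>Pow J. B * (if (u \<in> S) \<noteq> (v \<in> S) then P s S else 0))"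
  proof (rule sum_mono)
    fix S assume "S \<in> Pow J"
    then have "P s S * ((if u \<in> S \<and> v \<notin> S then r s S v else 0) + (if v \<in> S \<and> u \<notin> S then r s S u else 0))
        \<le> P s S * (if (u \<in> S) \<noteq> (v \<in> S) then B else 0)"
      using P r u v by (intro mult_left_mono) auto
    then show "P s S * ((if u \<in> S \<and> v \<notin> S then r s S v else 0) + (if v \<in> S \<and> u \<notin> S then r s S u else 0))
        \<le> B * (if (u \<in> S) \<noteq> (v \<in> S) then P s S else 0)"
      by (cases "u \<in> S"; cases "v \<in> S") (simp_all add: mult.commute)
  qed
  finally show ?thesis by (simp add: sum_distrib_left)
qed

section \<open>The reference instance H\<close>

definition rate_both_free :: "real \<Rightarrow> real \<Rightarrow> real" where
  "rate_both_free t0 s = (1 - ln 2) + (if t0 < s then ln 2 else 0)"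

definition rate_other_matched :: "real \<Rightarrow> real \<Rightarrow> real" where
  "rate_other_matched t0 s = (1 - ln 2) + (if t0 < s then 2 * ln 2 else 0)"

lemma ln2_bounds: "0 < ln (2::real)" "ln (2::real) < 1"
  using ln_2_less_1 by auto

lemma rate_both_free_bounds: "0 \<le> rate_both_free t0 s" "rate_both_free t0 s \<le> 2"
  by (auto simp: rate_both_free_def) (use ln2_bounds in linarith)+

lemma rate_other_matched_bounds: "0 \<le> rate_other_matched t0 s" "rate_other_matched t0 s \<le> 2"
  by (auto simp: rate_other_matched_def) (use ln2_bounds in linarith)+

lemma RES_rate_H_nonneg: "0 \<le> RES_rate H_I H_N H_lam t0 s S w"
  unfolding RES_rate_def using ln2_bounds
  by (intro sum_nonneg mult_nonneg_nonneg) (auto simp: H_lam_def)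

lemma RES_rate_H:
  "RES_rate H_I H_N H_lam t0 s S 0
     = (1 - ln 2) + (if t0 < s then 2 * ln 2 * (if 1 \<in> S then 1 else 1/2) else 0)"
  "RES_rate H_I H_N H_lam t0 s S (Suc 0)
     = (1 - ln 2) + (if t0 < s then 2 * ln 2 * (if 0 \<in> S then 1 else 1/2) else 0)"
proof -
  have "{i \<in> H_I. 0 \<in> H_N i} = {0, 1}" "{i \<in> H_I. Suc 0 \<in> H_N i} = {0, 2}"
    "H_N 0 - {0} = {1}" "H_N 0 - {Suc 0} = {0}"
    by (auto simp: H_I_def H_N_def)
  then show "RES_rate H_I H_N H_lam t0 s S 0
     = (1 - ln 2) + (if t0 < s then 2 * ln 2 * (if 1 \<in> S then 1 else 1/2) else 0)"
    "RES_rate H_I H_N H_lam t0 s S (Suc 0)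
     = (1 - ln 2) + (if t0 < s then 2 * ln 2 * (if 0 \<in> S then 1 else 1/2) else 0)"
    unfolding RES_rate_def by (simp_all add: H_N_def H_lam_def)
qed

lemma Pow_H_J: "Pow H_J = {{}, {0}, {1}, {0, 1}}"
  by (auto simp: H_J_def Pow_insert)

lemma finite_H_J: "finite H_J"
  by (simp add: H_J_def)

lemma H_J_subsets: "{} \<subseteq> H_J" "{0} \<subseteq> H_J" "{1} \<subseteq> H_J" "{0, 1} \<subseteq> H_J"
  by (auto simp: H_J_def)

lemma forward_flux_H:
  fixes PH :: "real \<Rightarrow> nat set \<Rightarrow> real" and t0 :: real
  defines "F \<equiv> forward_flux H_J (RES_rate H_I H_N H_lam t0) PH"
  shows "F {} s = - PH s {} * (2 * rate_both_free t0 s)"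
    and "F {0} s = PH s {} * rate_both_free t0 s - PH s {0} * rate_other_matched t0 s"
    and "F {1} s = PH s {} * rate_both_free t0 s - PH s {1} * rate_other_matched t0 s"
    and "F {0, 1} s = rate_other_matched t0 s * (PH s {0} + PH s {1})"
  by (auto simp: F_def forward_flux_def H_J_def RES_rate_H rate_both_free_def
      rate_other_matched_def algebra_simps insert_Diff_if)

locale reference_process =
  fixes t0 :: real and PH :: "real \<Rightarrow> nat set \<Rightarrow> real"
  assumes H: "matched_process H_J (RES_rate H_I H_N H_lam t0) PH"
begin

definition gbar :: "real \<Rightarrow> real" where "gbar s = 1 - both_matched H_J PH s 0 1"

lemma H_primitive:
  "primitive (\<lambda>t. PH t {}) (\<lambda>s. - PH s {} * (2 * rate_both_free t0 s))"
  "primitive (\<lambda>t. PH t {0}) (\<lambda>s. PH s {} * rate_both_free t0 s - PH s {0} * rate_other_matched t0 s)"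
  "primitive (\<lambda>t. PH t {1}) (\<lambda>s. PH s {} * rate_both_free t0 s - PH s {1} * rate_other_matched t0 s)"
  "primitive (\<lambda>t. PH t {0, 1}) (\<lambda>s. rate_other_matched t0 s * (PH s {0} + PH s {1}))"
proof -
  note flux = primitive_cong[OF matched_process_primitive[OF H]]
  show "primitive (\<lambda>t. PH t {}) (\<lambda>s. - PH s {} * (2 * rate_both_free t0 s))"
    by (rule flux[OF H_J_subsets(1)]) (simp_all only: forward_flux_H)
  show "primitive (\<lambda>t. PH t {0})
      (\<lambda>s. PH s {} * rate_both_free t0 s - PH s {0} * rate_other_matched t0 s)"
    by (rule flux[OF H_J_subsets(2)]) (simp_all only: forward_flux_H)
  show "primitive (\<lambda>t. PH t {1})
      (\<lambda>s. PH s {} * rate_both_free t0 s - PH s {1} * rate_other_matched t0 s)"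
    by (rule flux[OF H_J_subsets(3)]) (simp_all only: forward_flux_H)
  show "primitive (\<lambda>t. PH t {0, 1}) (\<lambda>s. rate_other_matched t0 s * (PH s {0} + PH s {1}))"
    by (rule flux[OF H_J_subsets(4)]) (simp_all only: forward_flux_H)
qed

lemma H_total: "t \<in> {0..1} \<Longrightarrow> PH t {} + PH t {0} + PH t {1} + PH t {0, 1} = 1"
  using matched_process_total[OF H finite_H_J, of t] unfolding Pow_H_J by (simp add: algebra_simps)

lemma gbar_eq: "gbar s = 1 - PH s {0, 1}"
proof -
  have "{S. S \<subseteq> H_J \<and> 0 \<in> S \<and> 1 \<in> S} = {{0, 1}}" by (auto simp: H_J_def)
  then show ?thesis unfolding gbar_def both_matched_def by simp
qed

lemma gbar_eq_sum: "s \<in> {0..1} \<Longrightarrow> gbar s = PH s {} + PH s {0} + PH s {1}"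
  using H_total[of s] by (simp add: gbar_eq)

lemma H_initial: "PH 0 S = (if S = {} then 1 else 0)"
  by (rule matched_process_initial[OF H])

lemma PH_nonneg:
  assumes "s \<in> {0..1}" "S \<subseteq> H_J"
  shows "0 \<le> PH s S"
  by (rule matched_process_nonneg[OF H finite_H_J _ _ _ RES_rate_H_nonneg _ assms])
    (auto simp: H_initial)

text \<open>The difference PH s {0} - PH s {1} solves a linear equation with initial value 0;
  the barrier argument applies to it with either sign.\<close>
lemma H_symmetric:
  assumes "s \<in> {0..1}"
  shows "PH s {0} = PH s {1}"
proof -
  have asym: "primitive (\<lambda>t. PH t {0} - PH t {1})
      (\<lambda>y. - rate_other_matched t0 y * (PH y {0} - PH y {1}))"
    using primitive_diff[OF H_primitive(2,3)] by (rule primitive_cong) (auto simp: algebra_simps)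
  have "- integral {0..s} (\<lambda>_. 0) \<le> c * (PH s {0} - PH s {1})" if "c = 1 \<or> c = -1" for c
  proof (rule primitive_barrier[OF primitive_cmult[OF asym]])
    fix y assume "c * (PH y {0} - PH y {1}) \<le> 0"
    then have "0 \<le> rate_other_matched t0 y * - (c * (PH y {0} - PH y {1}))"
      using rate_other_matched_bounds(1) by (intro mult_nonneg_nonneg) auto
    then show "- 0 \<le> c * (- rate_other_matched t0 y * (PH y {0} - PH y {1}))"
      by (simp add: algebra_simps)
  qed (use assms H_initial in auto)
  from this[of 1] this[of "-1"] show ?thesis by simp
qed

lemma H_unmatched_lower:
  assumes "s \<in> {0..1}"
  shows "exp (- 2 * s) \<le> PH s {} + PH s {1}"
proof -
  have "primitive (\<lambda>t. PH t {} + PH t {1} - exp (- 2 * t))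
     (\<lambda>y. - PH y {} * (2 * rate_both_free t0 y)
          + (PH y {} * rate_both_free t0 y - PH y {1} * rate_other_matched t0 y) - (- 2 * exp (- 2 * y)))"
    by (intro primitive_diff primitive_add H_primitive primitive_exp)
  then have "- integral {0..s} (\<lambda>_. 0) \<le> PH s {} + PH s {1} - exp (- 2 * s)"
  proof (rule primitive_barrier)
    fix y assume y: "y \<in> {0..s}" and below: "PH y {} + PH y {1} - exp (- 2 * y) \<le> 0"
    have "0 \<le> PH y {}" "0 \<le> PH y {1}" using y assms by (auto intro!: PH_nonneg simp: H_J_def)
    then have "PH y {} * rate_both_free t0 y \<le> PH y {} * 2"
      and "PH y {1} * rate_other_matched t0 y \<le> PH y {1} * 2"
      using rate_both_free_bounds(2) rate_other_matched_bounds(2) by (auto intro: mult_left_mono)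
    then show "- 0 \<le> - PH y {} * (2 * rate_both_free t0 y)
          + (PH y {} * rate_both_free t0 y - PH y {1} * rate_other_matched t0 y) - (- 2 * exp (- 2 * y))"
      using below by (simp add: algebra_simps)
  qed (use assms H_initial in auto)
  then show ?thesis by simp
qed

lemma gbar_lower:
  assumes "s \<in> {0..1}"
  shows "exp (- 2) \<le> gbar s"
proof -
  have "exp (- 2) \<le> exp (- 2 * s)" using assms by simp
  then show ?thesis
    using H_unmatched_lower[OF assms] PH_nonneg[OF assms H_J_subsets(2)] gbar_eq_sum[OF assms]
    by linarith
qed

lemma gbar_bounds:
  assumes "s \<in> {0..1}"
  shows "0 \<le> gbar s" "gbar s \<le> 1"
  using PH_nonneg[OF assms H_J_subsets(1)] PH_nonneg[OF assms H_J_subsets(2)]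
    PH_nonneg[OF assms H_J_subsets(3)] PH_nonneg[OF assms H_J_subsets(4)]
    gbar_eq_sum[OF assms] gbar_eq[of s]
  by auto

end

section \<open>GEN under the standing assumption\<close>

locale gen_setting = reference_process t0 PH
  for t0 :: real and PH :: "real \<Rightarrow> nat set \<Rightarrow> real" +
  fixes I :: "'i set" and J :: "'j set" and N :: "'i \<Rightarrow> 'j set"
    and lam :: "'i \<Rightarrow> real" and x :: "'i \<Rightarrow> 'j \<Rightarrow> real" and lab :: "'i \<Rightarrow> 'j \<Rightarrow> bool"
    and P :: "real \<Rightarrow> 'j set \<Rightarrow> real"
  assumes inst: "standing_instance I J N lam x"
    and labeling: "valid_labeling I J N x lab"
    and GEN_process: "matched_process J
          (GEN_rate I J N lam lab t0 (\<lambda>s. 1 - both_matched H_J PH s 0 1) P) P"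
begin

definition gbar_pair :: "'j \<Rightarrow> 'j \<Rightarrow> real \<Rightarrow> real" where
  "gbar_pair u v s = 1 - both_matched J P s u v"

definition unmatched :: "'j \<Rightarrow> real \<Rightarrow> real" where
  "unmatched u = expectation J P (\<lambda>S. if u \<notin> S then 1 else 0)"

definition pairs :: "('j \<times> 'j) set" where
  "pairs = {(u, v). \<exists>i\<in>I. card (N i) = 2 \<and> N i = {u, v}}"

definition partner :: "'i \<Rightarrow> 'j \<Rightarrow> 'j" where "partner i w = the_elem (N i - {w})"

definition first_labeled :: "'j \<Rightarrow> 'i set" where "first_labeled w = {i \<in> I. w \<in> N i \<and> lab i w}"

definition second_labeled :: "'j \<Rightarrow> 'i set" where
  "second_labeled w = {i \<in> I. w \<in> N i \<and> \<not> lab i w}"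

abbreviation rate :: "real \<Rightarrow> 'j set \<Rightarrow> 'j \<Rightarrow> real" where
  "rate \<equiv> GEN_rate I J N lam lab t0 gbar P"

lemma GEN_matched_process: "matched_process J rate P"
  using GEN_process by (simp add: gbar_def[abs_def])

lemma finite_I: "finite I" and finite_J: "finite J"
  using inst by (auto simp: standing_instance_def)

lemma neighbours_subset: "i \<in> I \<Longrightarrow> N i \<subseteq> J" and lam_pos: "i \<in> I \<Longrightarrow> 0 < lam i"
  using inst by (auto simp: standing_instance_def)

lemma first_or_second_class:
  "i \<in> I \<Longrightarrow> (card (N i) = 1 \<and> (\<forall>j\<in>N i. x i j = lam i)) \<or> (card (N i) = 2 \<and> (\<forall>j\<in>N i. x i j = lam i / 2))"
  using inst by (auto simp: standing_instance_def)

lemma first_class_labeled: "i \<in> I \<Longrightarrow> card (N i) = 1 \<Longrightarrow> j \<in> N i \<Longrightarrow> lab i j"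
  using labeling by (auto simp: valid_labeling_def)

lemma sum_incident_split:
  "(\<Sum>i\<in>{i\<in>I. w \<in> N i}. f i) = (\<Sum>i\<in>first_labeled w. f i) + (\<Sum>i\<in>second_labeled w. f i)"
proof -
  have "{i\<in>I. w \<in> N i} = first_labeled w \<union> second_labeled w"
    by (auto simp: first_labeled_def second_labeled_def)
  then show ?thesis
    using finite_I by (simp add: sum.union_disjoint first_labeled_def second_labeled_def disjoint_iff)
qed

lemma first_labeled_x_sum: "j \<in> J \<Longrightarrow> (\<Sum>i\<in>first_labeled j. x i j) = 1 - ln 2"
  using labeling by (auto simp: valid_labeling_def first_labeled_def)

lemma second_labeled_x_sum: "j \<in> J \<Longrightarrow> (\<Sum>i\<in>second_labeled j. x i j) = ln 2"
  using inst first_labeled_x_sum sum_incident_split[where w = j and f = "\<lambda>i. x i j"]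
  by (auto simp: standing_instance_def)

lemma second_labeled_type:
  assumes "i \<in> second_labeled w"
  shows "i \<in> I" "w \<in> N i" "card (N i) = 2" "x i w = lam i / 2"
proof -
  show i: "i \<in> I" "w \<in> N i" using assms by (auto simp: second_labeled_def)
  then show "card (N i) = 2" using assms first_or_second_class[of i] first_class_labeled[of i w]
    by (auto simp: second_labeled_def)
  then show "x i w = lam i / 2" using first_or_second_class[of i] i by auto
qed

lemma second_labeled_lam_sum:
  assumes "j \<in> J"
  shows "(\<Sum>i\<in>second_labeled j. lam i) = 2 * ln 2"
proof -
  have "(\<Sum>i\<in>second_labeled j. lam i) = (\<Sum>i\<in>second_labeled j. 2 * x i j)"
    by (rule sum.cong) (auto simp: second_labeled_type(4))
  then show ?thesis using second_labeled_x_sum[OF assms] by (simp add: sum_distrib_left[symmetric])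
qed

lemma second_class_partner:
  assumes i: "i \<in> I" "card (N i) = 2" "w \<in> N i"
  shows "N i - {w} = {partner i w}" "partner i w \<in> J" "(w, partner i w) \<in> pairs"
proof -
  obtain v where v: "N i = {w, v}" "v \<noteq> w"
    using i(2,3) by (auto simp: card_2_iff doubleton_eq_iff)
  then have p: "partner i w = v" by (simp add: partner_def insert_Diff_if)
  show "N i - {w} = {partner i w}" using v p by auto
  show "partner i w \<in> J" using neighbours_subset[OF i(1)] v p by auto
  show "(w, partner i w) \<in> pairs" unfolding pairs_def using i v p by blast
qed

lemma partner_second_labeled:
  assumes "i \<in> second_labeled w"
  shows "partner i w \<in> J" "(w, partner i w) \<in> pairs"
  using second_class_partner[OF second_labeled_type(1,3,2)[OF assms]] by auto

text \<open>The contribution of type i to rate s S w; on first-class labelled edges GEN uses the rate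
  lam i or lam i / 2, which is x i w in both cases.\<close>
definition type_rate :: "real \<Rightarrow> 'j set \<Rightarrow> 'j \<Rightarrow> 'i \<Rightarrow> real" where
  "type_rate s S w i =
     (if lab i w then x i w
      else if t0 < s
        then lam i * (gbar s / gbar_pair w (partner i w) s) * (if partner i w \<in> S then 1 else 1/2)
      else 0)"

lemma rate_eq_sum_type_rate: "rate s S w = (\<Sum>i\<in>{i\<in>I. w \<in> N i}. type_rate s S w i)"
  unfolding GEN_rate_def
proof (rule sum.cong[OF refl])
  fix i assume "i \<in> {i\<in>I. w \<in> N i}"
  then have i: "i \<in> I" "w \<in> N i" by auto
  show "lam i * (if card (N i) = 1 then 1 else \<Sum>v\<in>N i - {w}. if lab i w then 1 / 2
          else if t0 < s then if v \<in> S then gbar s / (1 - both_matched J P s w v)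
          else gbar s / (2 * (1 - both_matched J P s w v)) else 0) = type_rate s S w i"
  proof (cases "card (N i) = 1")
    case True
    then show ?thesis
      using first_or_second_class[OF i(1)] first_class_labeled[OF i(1) True i(2)] i by (auto simp: type_rate_def)
  next
    case False
    then have "card (N i) = 2" "\<forall>j\<in>N i. x i j = lam i / 2" using first_or_second_class[OF i(1)] by auto
    then show ?thesis using False i second_class_partner(1)[OF i(1) _ i(2)]
      by (auto simp: type_rate_def gbar_pair_def)
  qed
qed

lemma rate_nonneg:
  assumes "0 \<le> gbar s" and "\<And>i. i \<in> second_labeled w \<Longrightarrow> 0 < gbar_pair w (partner i w) s"
  shows "0 \<le> rate s S w"
  unfolding rate_eq_sum_type_rate
proof (rule sum_nonneg)
  fix i assume i: "i \<in> {i \<in> I. w \<in> N i}"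
  show "0 \<le> type_rate s S w i"
  proof (cases "lab i w")
    case True
    then show ?thesis using i first_or_second_class[of i] lam_pos[of i] by (auto simp: type_rate_def)
  next
    case False
    then have "0 < gbar_pair w (partner i w) s" using i assms(2) by (auto simp: second_labeled_def)
    then show ?thesis using False assms(1) lam_pos[of i] i by (auto simp: type_rate_def)
  qed
qed

lemma type_rate_second_labeled_le:
  assumes i: "i \<in> second_labeled w" and gbar: "0 \<le> gbar s" and c: "0 < c" and M: "0 \<le> M"
    and low: "c \<le> gbar_pair w (partner i w) s" and close: "gbar s - gbar_pair w (partner i w) s \<le> M"
  shows "type_rate s S w i \<le> (if t0 < s then lam i * (1 + M / c) else 0)"
proof (cases "t0 < s")
  case True
  define d where "d = gbar_pair w (partner i w) s"
  have d: "c \<le> d" "gbar s - d \<le> M" using low close by (auto simp: d_def)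
  have "gbar s / d \<le> (d + M) / d" using d c by (intro divide_right_mono) auto
  also have "\<dots> \<le> 1 + M / c" using d c M by (simp add: add_divide_distrib divide_left_mono)
  finally have q: "gbar s / d \<le> 1 + M / c" .
  have lam: "0 < lam i" using i lam_pos by (auto simp: second_labeled_def)
  have "type_rate s S w i = lam i * (gbar s / d) * (if partner i w \<in> S then 1 else 1/2)"
    using i True by (auto simp: type_rate_def second_labeled_def d_def)
  also have "\<dots> \<le> lam i * (gbar s / d)"
    using lam gbar d c by (intro mult_left_le) auto
  also have "\<dots> \<le> lam i * (1 + M / c)" using lam q by (intro mult_left_mono) auto
  finally show ?thesis using True by simp
next
  case False
  then show ?thesis using i by (auto simp: type_rate_def second_labeled_def)
qed

lemma rate_le:
  assumes w: "w \<in> J" and gbar: "0 \<le> gbar s" and c: "0 < c" and M: "0 \<le> M"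
    and low: "\<And>i. i \<in> second_labeled w \<Longrightarrow> c \<le> gbar_pair w (partner i w) s"
    and close: "\<And>i. i \<in> second_labeled w \<Longrightarrow> gbar s - gbar_pair w (partner i w) s \<le> M"
  shows "rate s S w \<le> rate_other_matched t0 s + 2 / c * M"
proof -
  have "(\<Sum>i\<in>first_labeled w. type_rate s S w i) = 1 - ln 2"
    using first_labeled_x_sum[OF w] by (simp add: type_rate_def first_labeled_def)
  then have "rate s S w = (1 - ln 2) + (\<Sum>i\<in>second_labeled w. type_rate s S w i)"
    unfolding rate_eq_sum_type_rate sum_incident_split by simp
  also have "\<dots> \<le> (1 - ln 2) + (\<Sum>i\<in>second_labeled w. (if t0 < s then lam i * (1 + M / c) else 0))"
    using type_rate_second_labeled_le[OF _ gbar c M low close] by (simp add: sum_mono)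
  also have "\<dots> = (1 - ln 2) + (if t0 < s then 2 * ln 2 * (1 + M / c) else 0)"
    using second_labeled_lam_sum[OF w] by (simp add: sum_distrib_right[symmetric])
  also have "\<dots> \<le> rate_other_matched t0 s + 2 / c * M"
  proof -
    have "0 \<le> M / c" using M c by simp
    then have "2 * ln 2 * (M / c) \<le> 2 * (M / c)" using ln2_bounds by (intro mult_right_mono) auto
    then show ?thesis using ln2_bounds M c by (auto simp: rate_other_matched_def algebra_simps)
  qed
  finally show ?thesis .
qed

lemma P_total: "t \<in> {0..1} \<Longrightarrow> (\<Sum>S\<in>Pow J. P t S) = 1"
  using matched_process_total[OF GEN_matched_process finite_J] .

lemma unmatched_eq: "unmatched u s = (\<Sum>S\<in>Pow J. if u \<notin> S then P s S else 0)"
  unfolding unmatched_def expectation_def by (rule sum.cong) auto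

lemma both_matched_eq: "both_matched J P s u v = (\<Sum>S\<in>Pow J. if u \<in> S \<and> v \<in> S then P s S else 0)"
proof -
  have "{S. S \<subseteq> J \<and> u \<in> S \<and> v \<in> S} = {S \<in> Pow J. u \<in> S \<and> v \<in> S}" by auto
  then show ?thesis
    unfolding both_matched_def using sum.inter_filter[of "Pow J" "P s" "\<lambda>S. u \<in> S \<and> v \<in> S"] finite_J
    by simp
qed

lemma gbar_pair_eq:
  assumes "s \<in> {0..1}"
  shows "gbar_pair u v s = (\<Sum>S\<in>Pow J. if \<not> (u \<in> S \<and> v \<in> S) then P s S else 0)"
proof -
  have "(\<Sum>S\<in>Pow J. P s S) = (\<Sum>S\<in>Pow J. (if u \<in> S \<and> v \<in> S then P s S else 0)
                                    + (if \<not> (u \<in> S \<and> v \<in> S) then P s S else 0))"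
    by (rule sum.cong) auto
  then show ?thesis using P_total[OF assms] by (simp add: sum.distrib both_matched_eq gbar_pair_def)
qed

lemma unmatched_primitive: "primitive (unmatched u) (expected_generator J rate P (\<lambda>S. if u \<notin> S then 1 else 0))"
  unfolding unmatched_def[abs_def] by (rule expectation_primitive[OF GEN_matched_process finite_J])

lemma both_matched_primitive:
  "primitive (\<lambda>t. both_matched J P t u v) (expected_generator J rate P (\<lambda>S. if u \<in> S \<and> v \<in> S then 1 else 0))"
proof -
  have "(\<lambda>t. both_matched J P t u v) = expectation J P (\<lambda>S. if u \<in> S \<and> v \<in> S then 1 else 0)"
    unfolding both_matched_eq expectation_def fun_eq_iff by (auto intro: sum.cong)
  then show ?thesis using expectation_primitive[OF GEN_matched_process finite_J] by simp
qed

lemma expected_partner_weight: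
  assumes "s \<in> {0..1}"
  shows "(\<Sum>S\<in>Pow J. if u \<notin> S then P s S * (if v \<in> S then 1 else 1/2) else 0)
       = (unmatched u s + gbar_pair u v s - unmatched v s) / 2"
proof -
  have "(\<Sum>S\<in>Pow J. if u \<notin> S then P s S * (if v \<in> S then 1 else 1/2) else 0)
      = (\<Sum>S\<in>Pow J. ((if u \<notin> S then P s S else 0) + P s S
           - (if u \<in> S \<and> v \<in> S then P s S else 0) - (if v \<notin> S then P s S else 0)) / 2)"
    by (rule sum.cong) auto
  also have "\<dots> = (unmatched u s + (\<Sum>S\<in>Pow J. P s S) - both_matched J P s u v - unmatched v s) / 2"
    by (simp only: sum_divide_distrib[symmetric] unmatched_eq both_matched_eq sum.distrib sum_subtractf)
  finally show ?thesis using P_total[OF assms] by (simp add: gbar_pair_def)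
qed

lemma unmatched_outflow_second_labeled:
  assumes i: "i \<in> second_labeled u" and s: "s \<in> {0..1}" and t0: "t0 < s"
    and d: "gbar_pair u (partner i u) s \<noteq> 0"
  shows "(\<Sum>S\<in>Pow J. if u \<notin> S then P s S * type_rate s S u i else 0)
    = x i u * gbar s
      + lam i / 2 * gbar s * (unmatched u s - unmatched (partner i u) s) / gbar_pair u (partner i u) s"
proof -
  define v where "v = partner i u"
  define c where "c = lam i * (gbar s / gbar_pair u v s)"
  have "(\<Sum>S\<in>Pow J. if u \<notin> S then P s S * type_rate s S u i else 0)
      = (\<Sum>S\<in>Pow J. c * (if u \<notin> S then P s S * (if v \<in> S then 1 else 1/2) else 0))"
    using i t0 by (intro sum.cong) (auto simp: type_rate_def second_labeled_def c_def v_def)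
  also have "\<dots> = c * ((unmatched u s + gbar_pair u v s - unmatched v s) / 2)"
    by (simp only: sum_distrib_left[symmetric] expected_partner_weight[OF s])
  finally show ?thesis
    using d second_labeled_type(4)[OF i] by (simp add: c_def v_def field_simps)
qed

lemma unmatched_outflow:
  assumes u: "u \<in> J" and s: "s \<in> {0..1}"
    and d: "\<And>i. i \<in> second_labeled u \<Longrightarrow> gbar_pair u (partner i u) s \<noteq> 0"
  shows "(\<Sum>S\<in>Pow J. if u \<notin> S then P s S * rate s S u else 0)
    = (1 - ln 2) * unmatched u s
      + (if t0 < s then ln 2 * gbar s
           + (\<Sum>i\<in>second_labeled u. lam i / 2 * gbar s * (unmatched u s - unmatched (partner i u) s)
                                      / gbar_pair u (partner i u) s)
         else 0)"
proof -
  define Q where "Q i = (\<Sum>S\<in>Pow J. if u \<notin> S then P s S * type_rate s S u i else 0)" for i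
  have "(\<Sum>S\<in>Pow J. if u \<notin> S then P s S * rate s S u else 0) = (\<Sum>i\<in>{i\<in>I. u \<in> N i}. Q i)"
    unfolding Q_def rate_eq_sum_type_rate sum_distrib_left
    by (subst sum.swap) (auto intro!: sum.cong)
  also have "\<dots> = (\<Sum>i\<in>first_labeled u. Q i) + (\<Sum>i\<in>second_labeled u. Q i)"
    by (rule sum_incident_split)
  also have "(\<Sum>i\<in>first_labeled u. Q i) = (\<Sum>i\<in>first_labeled u. x i u * unmatched u s)"
    unfolding Q_def unmatched_eq sum_distrib_left
    by (intro sum.cong) (auto simp: type_rate_def first_labeled_def)
  also have "\<dots> = (1 - ln 2) * unmatched u s"
    using first_labeled_x_sum[OF u] by (simp add: sum_distrib_right[symmetric])
  also have "(\<Sum>i\<in>second_labeled u. Q i)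
      = (if t0 < s then ln 2 * gbar s
           + (\<Sum>i\<in>second_labeled u. lam i / 2 * gbar s * (unmatched u s - unmatched (partner i u) s)
                                      / gbar_pair u (partner i u) s)
         else 0)"
  proof (cases "t0 < s")
    case True
    then show ?thesis
      using unmatched_outflow_second_labeled[OF _ s True d] second_labeled_x_sum[OF u]
      by (simp add: Q_def sum.distrib sum_distrib_right[symmetric])
  next
    case False
    then show ?thesis
      by (auto simp: Q_def type_rate_def second_labeled_def intro!: sum.neutral)
  qed
  finally show ?thesis .
qed

text \<open>The probability that vertex 0 of H is unmatched is PH s {} + PH s {1}.\<close>
definition marginal_gap :: "'j \<Rightarrow> real \<Rightarrow> real" where
  "marginal_gap u s = unmatched u s - (PH s {} + PH s {1})"

definition pair_gap :: "'j \<Rightarrow> 'j \<Rightarrow> real \<Rightarrow> real" where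
  "pair_gap u v s = gbar_pair u v s - gbar s"

definition marginal_error :: "real \<Rightarrow> real" where
  "marginal_error s = (\<Sum>w\<in>J. \<bar>marginal_gap w s\<bar>)"

definition pair_deficit :: "real \<Rightarrow> real" where
  "pair_deficit s = (\<Sum>(u, v)\<in>pairs. max 0 (- pair_gap u v s))"

definition marginal_gap_drift :: "'j \<Rightarrow> real \<Rightarrow> real" where
  "marginal_gap_drift u s = expected_generator J rate P (\<lambda>S. if u \<notin> S then 1 else 0) s
     + PH s {} * rate_both_free t0 s + PH s {1} * rate_other_matched t0 s"

definition pair_gap_drift :: "'j \<Rightarrow> 'j \<Rightarrow> real \<Rightarrow> real" where
  "pair_gap_drift u v s = rate_other_matched t0 s * (PH s {0} + PH s {1})
     - expected_generator J rate P (\<lambda>S. if u \<in> S \<and> v \<in> S then 1 else 0) s"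

lemma marginal_gap_primitive: "primitive (marginal_gap u) (marginal_gap_drift u)"
proof -
  have "primitive (\<lambda>t. unmatched u t - (PH t {} + PH t {1}))
      (\<lambda>s. expected_generator J rate P (\<lambda>S. if u \<notin> S then 1 else 0) s
         - (- PH s {} * (2 * rate_both_free t0 s)
            + (PH s {} * rate_both_free t0 s - PH s {1} * rate_other_matched t0 s)))"
    by (intro primitive_diff primitive_add unmatched_primitive H_primitive)
  then show ?thesis
    by (rule primitive_cong) (auto simp: marginal_gap_def marginal_gap_drift_def algebra_simps)
qed

lemma pair_gap_primitive: "primitive (pair_gap u v) (pair_gap_drift u v)"
proof -
  have "primitive (\<lambda>t. PH t {0, 1} - both_matched J P t u v) (pair_gap_drift u v)"
    unfolding pair_gap_drift_def[abs_def] by (intro primitive_diff H_primitive both_matched_primitive)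
  then show ?thesis
    by (rule primitive_cong) (auto simp: pair_gap_def gbar_pair_def gbar_eq)
qed

lemma pairs_finite: "finite pairs"
proof -
  have "pairs \<subseteq> J \<times> J" unfolding pairs_def using neighbours_subset by auto
  then show ?thesis using finite_J by (meson finite_SigmaI finite_subset)
qed

lemma pairs_mem: assumes "(u, v) \<in> pairs" shows "u \<in> J" "v \<in> J" "u \<noteq> v"
  using assms neighbours_subset by (auto simp: pairs_def)

lemma marginal_gap_le_error: "u \<in> J \<Longrightarrow> \<bar>marginal_gap u s\<bar> \<le> marginal_error s"
  unfolding marginal_error_def using finite_J by (intro member_le_sum) auto

lemma pair_deficit_nonneg: "0 \<le> pair_deficit s"
  unfolding pair_deficit_def by (intro sum_nonneg) auto

lemma pair_gap_le_deficit:
  assumes "(u, v) \<in> pairs"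
  shows "max 0 (- pair_gap u v s) \<le> pair_deficit s"
proof -
  have "(\<lambda>(u, v). max 0 (- pair_gap u v s)) (u, v) \<le> pair_deficit s"
    unfolding pair_deficit_def by (rule member_le_sum[OF assms _ pairs_finite]) auto
  then show ?thesis by simp
qed

text \<open>Since H is symmetric, the first-class labels of u contribute 1 - ln 2 and the
  second-class labels ln 2 times gbar, exactly as the single-neighbour and the shared type of H
  do; what remains is linear in the marginal gaps.\<close>
lemma marginal_gap_drift_eq:
  assumes u: "u \<in> J" and s: "s \<in> {0..1}"
    and d: "\<And>i. i \<in> second_labeled u \<Longrightarrow> gbar_pair u (partner i u) s \<noteq> 0"
  shows "marginal_gap_drift u s = - (1 - ln 2) * marginal_gap u s
    - (if t0 < s then \<Sum>i\<in>second_labeled u. lam i / 2 * gbar s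
         * (marginal_gap u s - marginal_gap (partner i u) s) / gbar_pair u (partner i u) s else 0)"
proof -
  have "unmatched u s - unmatched (partner i u) s = marginal_gap u s - marginal_gap (partner i u) s" for i
    by (simp add: marginal_gap_def)
  moreover have "gbar s = PH s {} + 2 * PH s {1}" using gbar_eq_sum[OF s] H_symmetric[OF s] by simp
  moreover note expected_generator_unmatched[OF finite_J u, of rate P s] unmatched_outflow[OF u s d]
  ultimately show ?thesis
    unfolding marginal_gap_drift_def
    by (auto simp: marginal_gap_def rate_both_free_def rate_other_matched_def algebra_simps)
qed

lemma partner_term_bound:
  assumes u: "u \<in> J" and s: "s \<in> {0..1}" and i: "i \<in> second_labeled u"
    and c: "0 < c" and low: "c \<le> gbar_pair u (partner i u) s"
  shows "\<bar>lam i / 2 * gbar s * (marginal_gap u s - marginal_gap (partner i u) s)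
           / gbar_pair u (partner i u) s\<bar> \<le> x i u * (2 / c * marginal_error s)"
proof -
  define g where "g = gbar_pair u (partner i u) s"
  define e where "e = marginal_gap u s - marginal_gap (partner i u) s"
  have g: "c \<le> g" using low by (simp add: g_def)
  have q: "gbar s / g \<le> 1 / c" "0 \<le> gbar s / g"
    using gbar_bounds[OF s] g c by (auto intro: frac_le)
  have e: "\<bar>e\<bar> \<le> 2 * marginal_error s"
    using marginal_gap_le_error[OF u, of s] marginal_gap_le_error[OF partner_second_labeled(1)[OF i], of s]
    unfolding e_def by arith
  have lam: "0 < lam i" using i lam_pos by (auto simp: second_labeled_def)
  have "\<bar>lam i / 2 * gbar s * e / g\<bar> = lam i / 2 * (gbar s / g) * \<bar>e\<bar>"
    using lam c gbar_bounds(1)[OF s] g by (simp add: abs_mult abs_divide)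
  also have "\<dots> \<le> lam i / 2 * (1 / c) * (2 * marginal_error s)"
    using q c lam e by (intro mult_mono mult_left_mono) auto
  also have "\<dots> = x i u * (2 / c * marginal_error s)"
    using second_labeled_type(4)[OF i] by simp
  finally show ?thesis by (simp add: g_def e_def)
qed

lemma partner_terms_bound:
  assumes u: "u \<in> J" and s: "s \<in> {0..1}"
    and c: "0 < c" and low: "\<And>i. i \<in> second_labeled u \<Longrightarrow> c \<le> gbar_pair u (partner i u) s"
  shows "\<bar>\<Sum>i\<in>second_labeled u. lam i / 2 * gbar s * (marginal_gap u s - marginal_gap (partner i u) s)
           / gbar_pair u (partner i u) s\<bar> \<le> 2 / c * marginal_error s"
proof -
  have "\<bar>\<Sum>i\<in>second_labeled u. lam i / 2 * gbar s * (marginal_gap u s - marginal_gap (partner i u) s)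
           / gbar_pair u (partner i u) s\<bar> \<le> (\<Sum>i\<in>second_labeled u. x i u * (2 / c * marginal_error s))"
    using partner_term_bound[OF u s _ c low] by (intro order_trans[OF sum_abs] sum_mono)
  also have "\<dots> = ln 2 * (2 / c * marginal_error s)"
    by (simp only: sum_distrib_right[symmetric] second_labeled_x_sum[OF u])
  also have "\<dots> \<le> 2 / c * marginal_error s"
    using ln2_bounds c by (intro mult_left_le_one_le) (auto simp: marginal_error_def)
  finally show ?thesis .
qed

lemma marginal_gap_drift_bound:
  assumes u: "u \<in> J" and s: "s \<in> {0..1}"
    and c: "0 < c" and low: "\<And>v w. (v, w) \<in> pairs \<Longrightarrow> c \<le> gbar_pair v w s"
  shows "\<bar>marginal_gap_drift u s\<bar> \<le> (1 + 2 / c) * marginal_error s"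
proof -
  have low_partner: "c \<le> gbar_pair u (partner i u) s" if "i \<in> second_labeled u" for i
    using low partner_second_labeled(2)[OF that] by blast
  then have "gbar_pair u (partner i u) s \<noteq> 0" if "i \<in> second_labeled u" for i
    using that c by fastforce
  note drift = marginal_gap_drift_eq[OF u s this]
  have "\<bar>(1 - ln 2) * marginal_gap u s\<bar> \<le> marginal_error s"
    using marginal_gap_le_error[OF u] ln2_bounds
    by (auto simp: abs_mult intro: order_trans[OF mult_left_le_one_le])
  moreover have "0 \<le> marginal_error s" by (simp add: marginal_error_def sum_nonneg)
  ultimately show ?thesis
    using partner_terms_bound[OF u s c low_partner] c
    by (simp only: drift mult_minus_left distrib_right mult_1_left) (auto simp: abs_le_iff)
qed

lemma exactly_one_matched_eq:
  assumes "s \<in> {0..1}"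
  shows "(\<Sum>S\<in>Pow J. if (u \<in> S) \<noteq> (v \<in> S) then P s S else 0)
    = 2 * gbar_pair u v s - unmatched u s - unmatched v s"
proof -
  have "(\<Sum>S\<in>Pow J. if (u \<in> S) \<noteq> (v \<in> S) then P s S else 0)
      = (\<Sum>S\<in>Pow J. 2 * (if \<not> (u \<in> S \<and> v \<in> S) then P s S else 0)
           - (if u \<notin> S then P s S else 0) - (if v \<notin> S then P s S else 0))"
    by (rule sum.cong) auto
  then show ?thesis
    by (simp only: sum_subtractf sum_distrib_left[symmetric] gbar_pair_eq[OF assms] unmatched_eq)
qed

lemma rate_le_deficit:
  assumes w: "w \<in> J" and s: "s \<in> {0..1}"
    and c: "0 < c" and low: "\<And>v w. (v, w) \<in> pairs \<Longrightarrow> c \<le> gbar_pair v w s"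
  shows "rate s S w \<le> rate_other_matched t0 s + 2 / c * pair_deficit s"
proof (rule rate_le[OF w gbar_bounds(1)[OF s] c pair_deficit_nonneg])
  fix i assume "i \<in> second_labeled w"
  then have "(w, partner i w) \<in> pairs" by (rule partner_second_labeled)
  then show "c \<le> gbar_pair w (partner i w) s" "gbar s - gbar_pair w (partner i w) s \<le> pair_deficit s"
    using low pair_gap_le_deficit[of w "partner i w" s] by (auto simp: pair_gap_def)
qed

text \<open>With equal marginals, the probability X that exactly one of u, v is matched is
  PH s {0} + PH s {1} + 2 pair_gap u v s, so a negative pair gap makes X smaller than in H,
  while the rate from X into "both matched" exceeds that of H by at most 2 / c times the
  pair deficit.\<close>
lemma pair_gap_drift_lower:
  assumes uv: "(u, v) \<in> pairs" and s: "s \<in> {0..1}"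
    and P_nonneg: "\<And>S. S \<subseteq> J \<Longrightarrow> 0 \<le> P s S" and marginal: "\<And>w. w \<in> J \<Longrightarrow> marginal_gap w s = 0"
    and c: "0 < c" and low: "\<And>v w. (v, w) \<in> pairs \<Longrightarrow> c \<le> gbar_pair v w s"
    and negative: "pair_gap u v s \<le> 0"
  shows "- (2 / c * pair_deficit s) \<le> pair_gap_drift u v s"
proof -
  have u: "u \<in> J" and v: "v \<in> J" and "u \<noteq> v" using pairs_mem[OF uv] by auto
  define X where "X = (\<Sum>S\<in>Pow J. if (u \<in> S) \<noteq> (v \<in> S) then P s S else 0)"
  have generator: "expected_generator J rate P (\<lambda>S. if u \<in> S \<and> v \<in> S then 1 else 0) s
      \<le> (rate_other_matched t0 s + 2 / c * pair_deficit s) * X"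
    unfolding X_def using P_nonneg rate_le_deficit[OF _ s c low]
    by (intro expected_generator_both_le finite_J u v \<open>u \<noteq> v\<close>)
  have "X \<le> (\<Sum>S\<in>Pow J. P s S)" unfolding X_def using P_nonneg by (intro sum_mono) auto
  then have X: "0 \<le> X" "X \<le> 1"
    using P_total[OF s] P_nonneg unfolding X_def by (auto intro: sum_nonneg)
  have "X = PH s {0} + PH s {1} + 2 * pair_gap u v s"
    using exactly_one_matched_eq[OF s, of u v] marginal[OF u] marginal[OF v] gbar_eq_sum[OF s]
      H_symmetric[OF s]
    by (simp add: X_def marginal_gap_def pair_gap_def)
  then have "rate_other_matched t0 s * X \<le> rate_other_matched t0 s * (PH s {0} + PH s {1})"
    using negative rate_other_matched_bounds(1) by (intro mult_left_mono) auto
  moreover have "2 / c * pair_deficit s * X \<le> 2 / c * pair_deficit s"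
    using X c pair_deficit_nonneg by (intro mult_left_le) auto
  ultimately show ?thesis using generator by (simp add: pair_gap_drift_def distrib_right)
qed

section \<open>Continuity induction\<close>

definition invariant :: "real \<Rightarrow> bool" where
  "invariant t \<longleftrightarrow> (\<forall>S. S \<subseteq> J \<longrightarrow> 0 \<le> P t S) \<and> (\<forall>u\<in>J. marginal_gap u t = 0)
     \<and> (\<forall>(u, v)\<in>pairs. 0 \<le> pair_gap u v t)"

lemma invariant_initial: "invariant 0"
proof -
  have P0: "P 0 S = (if S = {} then 1 else 0)" for S
    by (rule matched_process_initial[OF GEN_matched_process])
  have "unmatched u 0 = (\<Sum>S\<in>Pow J. if S = {} then 1 else 0)" for u
    unfolding unmatched_eq by (rule sum.cong) (auto simp: P0)
  then have "unmatched u 0 = 1" for u using finite_J by simp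
  moreover have "both_matched J P 0 u v = 0" for u v
    unfolding both_matched_eq by (rule sum.neutral) (auto simp: P0)
  ultimately show ?thesis
    by (auto simp: invariant_def P0 H_initial marginal_gap_def pair_gap_def gbar_pair_def gbar_eq)
qed

lemma gbar_pair_continuous: "continuous_on {0..1} (gbar_pair u v)"
proof -
  have "continuous_on {0..1} (\<lambda>t. 1 - both_matched J P t u v)"
    by (intro continuous_intros primitive_continuous[OF both_matched_primitive])
  then show ?thesis by (simp add: gbar_pair_def[abs_def])
qed

lemma marginal_error_continuous: "continuous_on {0..1} marginal_error"
  unfolding marginal_error_def[abs_def]
  by (intro continuous_intros primitive_continuous[OF marginal_gap_primitive])

lemma pair_deficit_continuous: "continuous_on {0..1} pair_deficit"
  unfolding pair_deficit_def[abs_def] split_beta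
  by (intro continuous_intros primitive_continuous[OF pair_gap_primitive])

end

text \<open>By gbar_lower, gbar never drops below e^(-2); a pair quantity that starts above gbar and
  moves by less than half of that stays above pair_floor.\<close>
definition pair_floor :: real where "pair_floor = exp (- 2) / 2"

lemma pair_floor_pos: "0 < pair_floor"
  by (simp add: pair_floor_def)

locale gen_window = gen_setting +
  fixes \<tau> \<tau>' :: real
  assumes window: "0 \<le> \<tau>" "\<tau> \<le> \<tau>'" "\<tau>' \<le> 1"
    and start: "invariant \<tau>"
    and pairs_close:
      "\<And>u v s. (u, v) \<in> pairs \<Longrightarrow> s \<in> {\<tau>..\<tau>'} \<Longrightarrow> \<bar>gbar_pair u v s - gbar_pair u v \<tau>\<bar> < pair_floor"
    and short: "real (card J) * (1 + 2 / pair_floor) * (\<tau>' - \<tau>) < 1"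
      "real (card pairs) * (2 / pair_floor) * (\<tau>' - \<tau>) < 1"
begin

lemma window_unit: "s \<in> {\<tau>..\<tau>'} \<Longrightarrow> s \<in> {0..1}"
  using window by auto

lemma pair_floor_le:
  assumes "(u, v) \<in> pairs" "s \<in> {\<tau>..\<tau>'}"
  shows "pair_floor \<le> gbar_pair u v s"
proof -
  have "exp (- 2) \<le> gbar \<tau>" using gbar_lower window by auto
  also have "gbar \<tau> \<le> gbar_pair u v \<tau>" using start assms(1) by (auto simp: invariant_def pair_gap_def)
  finally show ?thesis using pairs_close[OF assms] unfolding pair_floor_def abs_less_iff by linarith
qed

lemma P_nonneg_on_window:
  assumes "s \<in> {\<tau>..\<tau>'}" "S \<subseteq> J"
  shows "0 \<le> P s S"
proof (rule matched_process_nonneg[OF GEN_matched_process finite_J window _ _ assms])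
  fix y S w assume y: "y \<in> {\<tau>..\<tau>'}"
  show "0 \<le> rate y S w"
  proof (rule rate_nonneg)
    show "0 \<le> gbar y" using gbar_bounds window_unit[OF y] by auto
    fix i assume "i \<in> second_labeled w"
    show "0 < gbar_pair w (partner i w) y"
      using pair_floor_le[OF partner_second_labeled(2)[OF \<open>i \<in> second_labeled w\<close>] y] pair_floor_pos
      by linarith
  qed
qed (use start in \<open>auto simp: invariant_def\<close>)

lemma marginal_gap_le_integral_on_window:
  assumes w: "w \<in> J" and t: "t \<in> {\<tau>..\<tau>'}"
  shows "\<bar>marginal_gap w t\<bar> \<le> (1 + 2 / pair_floor) * integral {\<tau>..t} marginal_error"
proof -
  have "marginal_error integrable_on {\<tau>..t}"
    using window t by (intro integrable_continuous_real continuous_on_subset[OF marginal_error_continuous]) auto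
  then have "\<bar>marginal_gap w t\<bar> \<le> integral {\<tau>..t} (\<lambda>s. (1 + 2 / pair_floor) * marginal_error s)"
  proof (intro primitive_abs_le_integral[OF marginal_gap_primitive] integrable_on_mult_right)
    show "0 \<le> \<tau>" "\<tau> \<le> t" "t \<le> 1" using window t by auto
    show "marginal_gap w \<tau> = 0" using start w by (auto simp: invariant_def)
    fix s assume "s \<in> {\<tau>..t}"
    then have s: "s \<in> {\<tau>..\<tau>'}" using t by auto
    show "\<bar>marginal_gap_drift w s\<bar> \<le> (1 + 2 / pair_floor) * marginal_error s"
      by (rule marginal_gap_drift_bound[OF w window_unit[OF s] pair_floor_pos pair_floor_le[OF _ s]])
  qed
  then show ?thesis by simp
qed

lemma marginal_error_zero_on_window:
  assumes "t \<in> {\<tau>..\<tau>'}"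
  shows "marginal_error t = 0"
proof (rule gronwall_vanishing[OF window(2) _ _ _ _ short(1) assms])
  show "continuous_on {\<tau>..\<tau>'} marginal_error"
    using marginal_error_continuous by (rule continuous_on_subset) (use window in auto)
  show "0 \<le> marginal_error t" for t by (auto simp: marginal_error_def intro: sum_nonneg)
  show "0 \<le> real (card J) * (1 + 2 / pair_floor)" using pair_floor_pos by simp
  fix t assume t: "t \<in> {\<tau>..\<tau>'}"
  have "marginal_error t \<le> (\<Sum>w\<in>J. (1 + 2 / pair_floor) * integral {\<tau>..t} marginal_error)"
    unfolding marginal_error_def[of t] using marginal_gap_le_integral_on_window[OF _ t] by (rule sum_mono)
  then show "marginal_error t \<le> real (card J) * (1 + 2 / pair_floor) * integral {\<tau>..t} marginal_error"
    by simp
qed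

lemma marginal_gap_zero_on_window:
  assumes "u \<in> J" "t \<in> {\<tau>..\<tau>'}"
  shows "marginal_gap u t = 0"
  using marginal_gap_le_error[OF assms(1), of t] marginal_error_zero_on_window[OF assms(2)] by simp

lemma pair_gap_lower_on_window:
  assumes uv: "(u, v) \<in> pairs" and t: "t \<in> {\<tau>..\<tau>'}"
  shows "- integral {\<tau>..t} (\<lambda>s. 2 / pair_floor * pair_deficit s) \<le> pair_gap u v t"
proof (rule primitive_barrier[OF pair_gap_primitive])
  show "0 \<le> \<tau>" "\<tau> \<le> t" "t \<le> 1" using window t by auto
  show "0 \<le> pair_gap u v \<tau>" using start uv by (auto simp: invariant_def)
  show "0 \<le> 2 / pair_floor * pair_deficit s" for s using pair_floor_pos pair_deficit_nonneg by simp
  show "continuous_on {\<tau>..t} (\<lambda>s. 2 / pair_floor * pair_deficit s)"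
    by (intro continuous_intros continuous_on_subset[OF pair_deficit_continuous]) (use window t in auto)
  fix s assume "s \<in> {\<tau>..t}" and negative: "pair_gap u v s \<le> 0"
  then have s: "s \<in> {\<tau>..\<tau>'}" using t by auto
  show "- (2 / pair_floor * pair_deficit s) \<le> pair_gap_drift u v s"
    by (rule pair_gap_drift_lower[OF uv window_unit[OF s] P_nonneg_on_window[OF s]
          marginal_gap_zero_on_window[OF _ s] pair_floor_pos pair_floor_le[OF _ s] negative])
qed

lemma pair_deficit_zero_on_window:
  assumes "t \<in> {\<tau>..\<tau>'}"
  shows "pair_deficit t = 0"
proof (rule gronwall_vanishing[OF window(2) _ _ _ _ short(2) assms])
  show "continuous_on {\<tau>..\<tau>'} pair_deficit"
    using pair_deficit_continuous by (rule continuous_on_subset) (use window in auto)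
  show "0 \<le> pair_deficit t" for t by (rule pair_deficit_nonneg)
  show "0 \<le> real (card pairs) * (2 / pair_floor)" using pair_floor_pos by simp
  fix t assume t: "t \<in> {\<tau>..\<tau>'}"
  have "0 \<le> integral {\<tau>..t} pair_deficit"
    using t window pair_deficit_nonneg
    by (intro integral_nonneg integrable_continuous_real continuous_on_subset[OF pair_deficit_continuous]) auto
  then have "max 0 (- pair_gap u v t) \<le> 2 / pair_floor * integral {\<tau>..t} pair_deficit"
    if "(u, v) \<in> pairs" for u v
    using pair_gap_lower_on_window[OF that t] pair_floor_pos by simp
  then have "pair_deficit t \<le> (\<Sum>q\<in>pairs. 2 / pair_floor * integral {\<tau>..t} pair_deficit)"
    unfolding pair_deficit_def by (intro sum_mono) auto
  then show "pair_deficit t \<le> real (card pairs) * (2 / pair_floor) * integral {\<tau>..t} pair_deficit"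
    by simp
qed

lemma invariant_on_window:
  assumes "t \<in> {\<tau>..\<tau>'}"
  shows "invariant t"
proof -
  have "0 \<le> pair_gap u v t" if "(u, v) \<in> pairs" for u v
    using pair_gap_le_deficit[OF that, of t] pair_deficit_zero_on_window[OF assms] by simp
  then show ?thesis
    using P_nonneg_on_window[OF assms] marginal_gap_zero_on_window[OF _ assms]
    by (auto simp: invariant_def)
qed

end

context gen_setting
begin

lemma invariant_short_step:
  obtains h where "0 < h"
    "\<And>\<tau> t. 0 \<le> \<tau> \<Longrightarrow> \<tau> \<le> t \<Longrightarrow> t \<le> 1 \<Longrightarrow> t - \<tau> \<le> h \<Longrightarrow> invariant \<tau> \<Longrightarrow> invariant t"
proof -
  have "continuous_on {0..1} (case_prod gbar_pair q)" for q
    using gbar_pair_continuous by (cases q) simp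
  then obtain d where d: "0 < d" and close: "\<forall>q\<in>pairs. \<forall>s\<in>{0..1}. \<forall>s'\<in>{0..1}.
      dist s s' < d \<longrightarrow> dist (case_prod gbar_pair q s) (case_prod gbar_pair q s') < pair_floor"
    using finite_family_uniformly_continuous[OF pairs_finite compact_Icc _ pair_floor_pos] by blast
  define A1 where "A1 = real (card J) * (1 + 2 / pair_floor)"
  define A2 where "A2 = real (card pairs) * (2 / pair_floor)"
  have A: "0 \<le> A1" "0 \<le> A2" using pair_floor_pos by (auto simp: A1_def A2_def)
  define h where "h = min (d / 2) (1 / (A1 + A2 + 1))"
  have h: "0 < h" "h < d" using d A by (auto simp: h_def)
  have "(A1 + A2 + 1) * h \<le> (A1 + A2 + 1) * (1 / (A1 + A2 + 1))"
    using A by (intro mult_left_mono) (auto simp: h_def)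
  also have "\<dots> = 1" using A by simp
  finally have "(A1 + A2 + 1) * h \<le> 1" .
  moreover have "0 \<le> A1 * h" "0 \<le> A2 * h" using A h by simp_all
  ultimately have short: "A1 * h < 1" "A2 * h < 1" using h by (simp_all add: algebra_simps)
  show ?thesis
  proof (rule that[OF h(1)])
    fix \<tau> t assume window: "0 \<le> \<tau>" "\<tau> \<le> t" "t \<le> 1" and length: "t - \<tau> \<le> h"
      and start: "invariant \<tau>"
    have "A1 * (t - \<tau>) < 1" "A2 * (t - \<tau>) < 1"
      using mult_left_mono[OF length A(1)] mult_left_mono[OF length A(2)] short by auto
    moreover have "\<bar>gbar_pair u v s - gbar_pair u v \<tau>\<bar> < pair_floor"
      if "(u, v) \<in> pairs" "s \<in> {\<tau>..t}" for u v s
      using close[rule_format, OF that(1), of s \<tau>] that(2) window length h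
      by (auto simp: dist_real_def)
    ultimately interpret gen_window t0 PH I J N lam x lab P \<tau> t
      using window start by unfold_locales (auto simp: A1_def A2_def)
    show "invariant t" by (rule invariant_on_window) (use window in auto)
  qed
qed

lemma invariant_everywhere: "t \<in> {0..1} \<Longrightarrow> invariant t"
  using invariant_short_step unit_interval_stepping[of invariant] invariant_initial by metis

end

theorem claim4p2:
  fixes I :: "'i set" and J :: "'j set" and N :: "'i \<Rightarrow> 'j set"
    and lam :: "'i \<Rightarrow> real" and x :: "'i \<Rightarrow> 'j \<Rightarrow> real" and lab :: "'i \<Rightarrow> 'j \<Rightarrow> bool"
    and t0 t :: real and PH :: "real \<Rightarrow> nat set \<Rightarrow> real" and P :: "real \<Rightarrow> 'j set \<Rightarrow> real"
    and i :: 'i and u v :: 'j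
  assumes inst: "standing_instance I J N lam x"
    and lab: "valid_labeling I J N x lab"
    and t0: "0 \<le> t0" "t0 \<le> 1"
    and H: "matched_process H_J (RES_rate H_I H_N H_lam t0) PH"
    and GEN: "matched_process J
               (GEN_rate I J N lam lab t0 (\<lambda>s. 1 - both_matched H_J PH s 0 1) P) P"
    and i: "i \<in> I" "card (N i) = 2" "N i = {u, v}"
    and t: "t \<in> {0..1}"
  shows "(1 - both_matched H_J PH t 0 1) / (1 - both_matched J P t u v) \<le> 1"
proof -
  interpret gen_setting t0 PH I J N lam x lab P
    by unfold_locales (fact H inst lab GEN)+
  have "(u, v) \<in> pairs" using i unfolding pairs_def by blast
  then have "gbar t \<le> gbar_pair u v t"
    using invariant_everywhere[OF t] by (auto simp: invariant_def pair_gap_def)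
  moreover have "0 < gbar t" using gbar_lower[OF t] exp_gt_zero[of "- 2"] by linarith
  ultimately show ?thesis by (simp add: gbar_def gbar_pair_def)
qed

end
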